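(* Let $q,n\ge 2$ and $0<d\le n$ be integers with $(q,d)\neq(2,n)$, and let $G=H_q(n,d)$. (a) If $q\ge 3$, then the graph distance between any two vertices of $G$ is at most $2$, and $\mathrm{girth}(G)=3$. (b) If $q=2$ and $d\le \frac{2n}{3}$, then $\mathrm{girth}(G)=3$. (c) If $q=2$ and $\frac{2n}{3}<d<n$, then $\mathrm{girth}(G)=4$; moreover, $G$ contains a cycle of odd length.
   Context: $\mathbb{Z}_q=\mathbb{Z}/q\mathbb{Z}$. For $x,y\in\mathbb{Z}_q^n$, $\mathrm{d}(x,y)=|\{i: x_i\neq y_i\}|$ is the Hamming distance. The Hamming-distance graph $H_q(n,d)$ is the simple undirected graph with vertex set $\mathbb{Z}_q^n$ in which $x,y$ are adjacent iff $\mathrm{d}(x,y)\ge d$. The girth is the length of a shortest cycle. *)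

theory Defs
  imports Main "HOL-Library.Extended_Nat"
begin

definition hvert :: "nat \<Rightarrow> nat \<Rightarrow> nat list set" where
  "hvert q n = {xs. length xs = n \<and> (\<forall>x\<in>set xs. x < q)}"

definition hdist :: "nat list \<Rightarrow> nat list \<Rightarrow> nat" where
  "hdist xs ys = card {i. i < length xs \<and> xs ! i \<noteq> ys ! i}"

definition hadj :: "nat \<Rightarrow> nat \<Rightarrow> nat \<Rightarrow> nat list \<Rightarrow> nat list \<Rightarrow> bool" where
  "hadj q n d x y \<longleftrightarrow> x \<in> hvert q n \<and> y \<in> hvert q n \<and> x \<noteq> y \<and> hdist x y \<ge> d"

definition is_walk :: "'a set \<Rightarrow> ('a \<Rightarrow> 'a \<Rightarrow> bool) \<Rightarrow> 'a list \<Rightarrow> bool" where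
  "is_walk V E p \<longleftrightarrow> p \<noteq> [] \<and> set p \<subseteq> V \<and> (\<forall>i. i + 1 < length p \<longrightarrow> E (p ! i) (p ! (i + 1)))"

text \<open>Graph distance (infinite if no walk exists); walk length = number of edges.\<close>
definition gdist :: "'a set \<Rightarrow> ('a \<Rightarrow> 'a \<Rightarrow> bool) \<Rightarrow> 'a \<Rightarrow> 'a \<Rightarrow> enat" where
  "gdist V E u v = (INF p \<in> {p. is_walk V E p \<and> hd p = u \<and> last p = v}. enat (length p - 1))"

definition is_cycle :: "'a set \<Rightarrow> ('a \<Rightarrow> 'a \<Rightarrow> bool) \<Rightarrow> 'a list \<Rightarrow> bool" where
  "is_cycle V E c \<longleftrightarrow> length c \<ge> 3 \<and> distinct c \<and> is_walk V E c \<and> E (last c) (hd c)"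

definition girth :: "'a set \<Rightarrow> ('a \<Rightarrow> 'a \<Rightarrow> bool) \<Rightarrow> enat" where
  "girth V E = (INF c \<in> {c. is_cycle V E c}. enat (length c))"

end

theory Submission
  imports Defs
begin

text \<open>For q \<ge> 3 any two words u, v have a common neighbour w at Hamming distance n from both:
  in every coordinate pick a symbol different from u_i and v_i. This gives diameter \<le> 2, and
  applied to the adjacent words 0\<dots>0 and 1\<dots>1 it gives a triangle.
  For q = 2 the three pairwise distances of any three words sum to at most 2n, since in each
  coordinate at most two of the three pairs disagree; so for d > 2n/3 there is no triangle, while
  0\<dots>0, 1\<dots>1, 10\<dots>0, 01\<dots>1 is a 4-cycle. For d \<le> 2n/3 the words 0^n, 1^d 0^(n-d), 0^(n-d) 1^d
  form a triangle.\<close>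

lemma is_walk_singleton [simp]: "is_walk V E [x] \<longleftrightarrow> x \<in> V"
  by (auto simp: is_walk_def)

lemma is_walk_Cons_Cons [simp]:
  "is_walk V E (x # y # xs) \<longleftrightarrow> x \<in> V \<and> E x y \<and> is_walk V E (y # xs)"
proof
  assume walk: "is_walk V E (x # y # xs)"
  then have steps: "E ((x # y # xs) ! i) ((x # y # xs) ! (i + 1))" if "i + 1 < length (x # y # xs)" for i
    using that by (auto simp: is_walk_def)
  have "E ((y # xs) ! i) ((y # xs) ! (i + 1))" if "i + 1 < length (y # xs)" for i
    using steps[of "Suc i"] that by simp
  with steps[of 0] walk show "x \<in> V \<and> E x y \<and> is_walk V E (y # xs)"
    by (auto simp: is_walk_def)
next
  assume "x \<in> V \<and> E x y \<and> is_walk V E (y # xs)"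
  then show "is_walk V E (x # y # xs)"
    unfolding is_walk_def by (auto simp: nth_Cons split: nat.split)
qed

lemma gdist_le_walk_length:
  assumes "is_walk V E p"
  shows "gdist V E (hd p) (last p) \<le> enat (length p - 1)"
  unfolding gdist_def using assms by (auto intro: INF_lower)

lemma girth_eqI:
  assumes "is_cycle V E c" and "\<And>c'. is_cycle V E c' \<Longrightarrow> length c \<le> length c'"
  shows "girth V E = enat (length c)"
  unfolding girth_def
  by (rule antisym) (use assms in \<open>auto intro: INF_lower INF_greatest\<close>)

lemma girth_eq_3I:
  assumes "E a b" "E b c" "E c a" "a \<in> V" "b \<in> V" "c \<in> V" "irreflp E"
  shows "girth V E = 3"
proof -
  have "a \<noteq> b" "b \<noteq> c" "c \<noteq> a"
    using assms(1-3) irreflpD[OF assms(7)] by auto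
  with assms have "is_cycle V E [a, b, c]" by (auto simp: is_cycle_def)
  then have "girth V E = enat (length [a, b, c])"
    by (rule girth_eqI) (simp add: is_cycle_def)
  then show ?thesis by (simp add: numeral_eq_enat)
qed

lemma girth_eq_4I:
  assumes "E a b" "E b c" "E c e" "E e a" "a \<in> V" "b \<in> V" "c \<in> V" "e \<in> V"
    and "a \<noteq> c" "b \<noteq> e" "irreflp E"
    and triangle_free: "\<And>x y z. E x y \<Longrightarrow> E y z \<Longrightarrow> E z x \<Longrightarrow> False"
  shows "girth V E = 4"
proof -
  have "a \<noteq> b" "b \<noteq> c" "c \<noteq> e" "e \<noteq> a"
    using assms(1-4) irreflpD[OF assms(11)] by auto
  with assms have "is_cycle V E [a, b, c, e]" by (auto simp: is_cycle_def)
  then have "girth V E = enat (length [a, b, c, e])"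
  proof (rule girth_eqI)
    fix c' assume cycle: "is_cycle V E c'"
    show "length [a, b, c, e] \<le> length c'"
    proof (rule ccontr)
      assume "\<not> ?thesis"
      with cycle have "length c' = 3" by (auto simp: is_cycle_def)
      then obtain x y z where "c' = [x, y, z]"
        by (auto simp: length_Suc_conv numeral_3_eq_3)
      with cycle triangle_free show False by (auto simp: is_cycle_def)
    qed
  qed
  then show ?thesis by (simp add: numeral_eq_enat)
qed

lemma hdist_eq_sum: "hdist x y = (\<Sum>i<length x. of_bool (x ! i \<noteq> y ! i))"
  by (simp add: hdist_def Collect_conj_eq lessThan_def)

lemma hdist_eq_length:
  assumes "\<And>i. i < length x \<Longrightarrow> x ! i \<noteq> y ! i"
  shows "hdist x y = length x"
proof -
  have "{i. i < length x \<and> x ! i \<noteq> y ! i} = {..<length x}" using assms by auto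
  then show ?thesis by (simp add: hdist_def)
qed

lemma hadjI:
  assumes "x \<in> hvert q n" "y \<in> hvert q n" "0 < d" "d \<le> hdist x y"
  shows "hadj q n d x y"
  using assms by (auto simp: hadj_def hdist_def)

lemma irreflp_hadj: "irreflp (hadj q n d)"
  by (simp add: irreflp_def hadj_def)

lemma hdist_cyclic_sum_le_binary:
  assumes "a \<in> hvert 2 n" "b \<in> hvert 2 n" "c \<in> hvert 2 n"
  shows "hdist a b + hdist b c + hdist c a \<le> 2 * n"
proof -
  have len: "length a = n" "length b = n" "length c = n"
    using assms by (auto simp: hvert_def)
  have pointwise: "of_bool (a ! i \<noteq> b ! i) + of_bool (b ! i \<noteq> c ! i) + of_bool (c ! i \<noteq> a ! i) \<le> (2::nat)"
    if "i < n" for i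
  proof -
    have "a ! i < 2" "b ! i < 2" "c ! i < 2"
      using assms that len by (auto simp: hvert_def)
    then show ?thesis by auto
  qed
  have "hdist a b + hdist b c + hdist c a
      = (\<Sum>i<n. of_bool (a ! i \<noteq> b ! i) + of_bool (b ! i \<noteq> c ! i) + of_bool (c ! i \<noteq> a ! i))"
    by (simp only: hdist_eq_sum len sum.distrib)
  also have "\<dots> \<le> (\<Sum>i<n. 2)"
    using pointwise by (intro sum_mono) auto
  finally show ?thesis by simp
qed

lemma binary_hamming_triangle_free:
  assumes "2 * n < 3 * d" "hadj 2 n d x y" "hadj 2 n d y z" "hadj 2 n d z x"
  shows False
proof -
  have "hdist x y + hdist y z + hdist z x \<le> 2 * n"
    using assms by (intro hdist_cyclic_sum_le_binary) (auto simp: hadj_def)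
  moreover have "d \<le> hdist x y" "d \<le> hdist y z" "d \<le> hdist z x"
    using assms by (auto simp: hadj_def)
  ultimately show False using assms(1) by linarith
qed

definition bword :: "nat \<Rightarrow> nat set \<Rightarrow> nat list" where
  "bword n A = map (\<lambda>i. if i \<in> A then 1 else 0) [0..<n]"

lemma bword_in_hvert: "2 \<le> q \<Longrightarrow> bword n A \<in> hvert q n"
  by (auto simp: bword_def hvert_def)

lemma hdist_bword: "hdist (bword n A) (bword n B) = card {i. i < n \<and> (i \<in> A) \<noteq> (i \<in> B)}"
  unfolding hdist_def bword_def by (rule arg_cong[where f = card]) (auto split: if_splits)

lemma card_le_hdist_bword:
  assumes "S \<subseteq> {i. i < n \<and> (i \<in> A) \<noteq> (i \<in> B)}"
  shows "card S \<le> hdist (bword n A) (bword n B)"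
  unfolding hdist_bword by (rule card_mono[OF _ assms]) simp

lemma bword_inj_on: "inj_on (bword n) (Pow {..<n})"
proof (rule inj_onI)
  fix A B assume A: "A \<in> Pow {..<n}" and B: "B \<in> Pow {..<n}" and eq: "bword n A = bword n B"
  have "(i \<in> A) = (i \<in> B)" if "i < n" for i
    using arg_cong[OF eq, of "\<lambda>w. w ! i"] that by (simp add: bword_def split: if_splits)
  with A B show "A = B" by blast
qed

lemma common_far_neighbour:
  assumes "3 \<le> q" "u \<in> hvert q n" "v \<in> hvert q n"
  obtains w where "w \<in> hvert q n" "hdist u w = n" "hdist w v = n"
proof -
  have "\<exists>s\<in>{0, 1, 2::nat}. a \<noteq> s \<and> s \<noteq> b" for a b
    by simp arith
  then have "\<forall>i. \<exists>s. s \<in> {0, 1, 2} \<and> u ! i \<noteq> s \<and> s \<noteq> v ! i" by blast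
  from choice[OF this] obtain f where f: "\<And>i. f i \<in> {0, 1, 2} \<and> u ! i \<noteq> f i \<and> f i \<noteq> v ! i"
    by blast
  define w where "w = map f [0..<n]"
  have len: "length u = n" "length w = n" using assms by (auto simp: hvert_def w_def)
  have "f i < q" for i
    using f[of i] assms(1) by auto
  then have "w \<in> hvert q n" by (auto simp: hvert_def w_def)
  moreover have "hdist u w = n" "hdist w v = n"
    using hdist_eq_length[of u w] hdist_eq_length[of w v] f len by (simp_all add: w_def)
  ultimately show ?thesis by (rule that)
qed

lemma hamming_gdist_le_2:
  assumes "3 \<le> q" "0 < d" "d \<le> n" "u \<in> hvert q n" "v \<in> hvert q n"
  shows "gdist (hvert q n) (hadj q n d) u v \<le> 2"
proof -
  obtain w where w: "w \<in> hvert q n" "hdist u w = n" "hdist w v = n"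
    using common_far_neighbour assms(1,4,5) .
  have "is_walk (hvert q n) (hadj q n d) [u, w, v]"
    using assms w by (auto intro!: hadjI)
  from gdist_le_walk_length[OF this] show ?thesis
    by (simp add: numeral_eq_enat numeral_2_eq_2)
qed

lemma hamming_girth_eq_3:
  assumes "3 \<le> q" "0 < d" "d \<le> n"
  shows "girth (hvert q n) (hadj q n d) = 3"
proof -
  let ?u = "replicate n 0" and ?v = "replicate n 1"
  have V: "?u \<in> hvert q n" "?v \<in> hvert q n" using assms(1) by (auto simp: hvert_def)
  obtain w where w: "w \<in> hvert q n" "hdist ?u w = n" "hdist w ?v = n"
    using common_far_neighbour assms(1) V .
  have "hdist ?v ?u = n" by (subst hdist_eq_length) auto
  with V w assms have "hadj q n d ?u w" "hadj q n d w ?v" "hadj q n d ?v ?u"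
    by (auto intro!: hadjI)
  from this V(1) w(1) V(2) irreflp_hadj show ?thesis by (rule girth_eq_3I)
qed

lemma binary_hamming_girth_eq_3:
  assumes "0 < d" "3 * d \<le> 2 * n"
  shows "girth (hvert 2 n) (hadj 2 n d) = 3"
proof -
  let ?a = "bword n {}" and ?b = "bword n {..<d}" and ?c = "bword n {n - d..<n}"
  have "card {..<d} \<le> hdist ?a ?b"
    by (rule card_le_hdist_bword) (use assms in auto)
  then have ab: "d \<le> hdist ?a ?b" by simp
  have "card {n - d..<n} \<le> hdist ?c ?a"
    by (rule card_le_hdist_bword) auto
  then have ca: "d \<le> hdist ?c ?a" using assms by simp
  have bc: "d \<le> hdist ?b ?c"
  proof (cases "2 * d \<le> n")
    case True
    have "card {..<d} \<le> hdist ?b ?c"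
      by (rule card_le_hdist_bword) (use True in auto)
    then show ?thesis by simp
  next
    case False
    have "card ({..<n - d} \<union> {d..<n}) \<le> hdist ?b ?c"
      by (rule card_le_hdist_bword) (use False in auto)
    moreover have "card ({..<n - d} \<union> {d..<n}) = 2 * (n - d)"
      using False by (subst card_Un_disjoint) auto
    ultimately show ?thesis using assms by linarith
  qed
  have V: "?a \<in> hvert 2 n" "?b \<in> hvert 2 n" "?c \<in> hvert 2 n"
    by (simp_all add: bword_in_hvert)
  with ab bc ca assms have "hadj 2 n d ?a ?b" "hadj 2 n d ?b ?c" "hadj 2 n d ?c ?a"
    by (auto intro!: hadjI)
  from this V irreflp_hadj show ?thesis by (rule girth_eq_3I)
qed

lemma binary_hamming_girth_eq_4:
  assumes "2 * n < 3 * d" "d < n"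
  shows "girth (hvert 2 n) (hadj 2 n d) = 4"
proof -
  let ?a = "bword n {}" and ?b = "bword n {..<n}" and ?c = "bword n {0}" and ?e = "bword n {1..<n}"
  have "card {..<n} \<le> hdist ?a ?b" "card {..<n} \<le> hdist ?c ?e"
    by (rule card_le_hdist_bword; auto)+
  moreover have "card {1..<n} \<le> hdist ?b ?c" "card {1..<n} \<le> hdist ?e ?a"
    by (rule card_le_hdist_bword; auto)+
  ultimately have dist: "d \<le> hdist ?a ?b" "d \<le> hdist ?b ?c" "d \<le> hdist ?c ?e" "d \<le> hdist ?e ?a"
    using assms by auto
  have V: "?a \<in> hvert 2 n" "?b \<in> hvert 2 n" "?c \<in> hvert 2 n" "?e \<in> hvert 2 n"
    by (simp_all add: bword_in_hvert)
  with dist assms have adj: "hadj 2 n d ?a ?b" "hadj 2 n d ?b ?c" "hadj 2 n d ?c ?e" "hadj 2 n d ?e ?a"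
    by (auto intro!: hadjI)
  have "?a ! 0 \<noteq> ?c ! 0" "?b ! 0 \<noteq> ?e ! 0"
    using assms by (simp_all add: bword_def)
  then have "?a \<noteq> ?c" "?b \<noteq> ?e" by metis+
  from adj V this irreflp_hadj binary_hamming_triangle_free[OF assms(1)] show ?thesis
    by (rule girth_eq_4I)
qed

text \<open>Supports of an odd cycle: alternately the prefix {..<k} and its complement. Consecutive
  supports disagree in every position except k, and the last one, {..<2 * (n div 2)}, disagrees
  with the first one, {}, in at least n - 1 positions.\<close>

definition zigzag_support :: "nat \<Rightarrow> nat \<Rightarrow> nat set" where
  "zigzag_support n k = (if even k then {..<k} else {k..<n})"

lemma zigzag_support_adjacent:
  assumes "0 < d" "d < n"
  shows "hadj 2 n d (bword n (zigzag_support n k)) (bword n (zigzag_support n (Suc k)))"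
proof -
  have "card ({..<n} - {k}) \<le> hdist (bword n (zigzag_support n k)) (bword n (zigzag_support n (Suc k)))"
    by (rule card_le_hdist_bword) (auto simp: zigzag_support_def)
  moreover have "n - 1 \<le> card ({..<n} - {k})" by (simp add: card_Diff_singleton_if)
  ultimately show ?thesis using assms by (intro hadjI bword_in_hvert) auto
qed

lemma zigzag_support_inj_on: "inj_on (zigzag_support n) {..2 * (n div 2)}"
proof (rule inj_onI)
  fix k k' assume "k \<in> {..2 * (n div 2)}" "k' \<in> {..2 * (n div 2)}"
    and eq: "zigzag_support n k = zigzag_support n k'"
  then have bounds: "k \<le> n" "k' \<le> n" "odd k \<Longrightarrow> k < n" "odd k' \<Longrightarrow> k' < n"
    by auto presburger+
  have "n - 1 \<in> zigzag_support n j" "0 \<notin> zigzag_support n j" if "odd j" "j < n" for j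
    using that by (auto simp: zigzag_support_def intro: odd_pos)
  moreover have "0 \<in> zigzag_support n j" if "even j" "j \<noteq> 0" for j
    using that by (simp add: zigzag_support_def)
  moreover have "zigzag_support n 0 = {}" by (simp add: zigzag_support_def)
  ultimately have "even k = even k'"
    using eq bounds by (metis empty_iff)
  then show "k = k'"
    using eq bounds by (auto simp: zigzag_support_def atLeastLessThan_eq_iff split: if_splits)
qed

lemma binary_hamming_odd_cycle:
  assumes "0 < d" "d < n"
  shows "\<exists>c. is_cycle (hvert 2 n) (hadj 2 n d) c \<and> odd (length c)"
proof -
  define m where "m = 2 * (n div 2)"
  define c where "c = map (\<lambda>k. bword n (zigzag_support n k)) [0..<Suc m]"
  have len: "length c = Suc m" "3 \<le> Suc m" "odd (Suc m)"
    using assms by (auto simp: c_def m_def)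
  have nth_c: "c ! k = bword n (zigzag_support n k)" if "k \<le> m" for k
    using that by (simp add: c_def del: upt_Suc)
  have "zigzag_support n ` {..m} \<subseteq> Pow {..<n}"
    by (auto simp: zigzag_support_def m_def)
  then have "inj_on (bword n \<circ> zigzag_support n) {..m}"
    unfolding m_def by (rule comp_inj_on[OF zigzag_support_inj_on inj_on_subset[OF bword_inj_on]])
  moreover have "{0..<Suc m} = {..m}" by auto
  ultimately have "distinct c"
    by (simp add: c_def distinct_map comp_def del: upt_Suc)
  moreover have "is_walk (hvert 2 n) (hadj 2 n d) c"
    unfolding is_walk_def
  proof (intro conjI allI impI)
    show "c \<noteq> []" "set c \<subseteq> hvert 2 n"
      using len by (auto simp: c_def bword_in_hvert simp del: upt_Suc)
    fix k assume "k + 1 < length c"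
    then show "hadj 2 n d (c ! k) (c ! (k + 1))"
      using len nth_c zigzag_support_adjacent[OF assms] by simp
  qed
  moreover have "hadj 2 n d (last c) (hd c)"
  proof -
    have "c \<noteq> []" using len(1) by auto
    then have "last c = c ! m" "hd c = c ! 0"
      using len(1) by (simp_all add: last_conv_nth hd_conv_nth)
    then have "last c = bword n {..<m}" "hd c = bword n {}"
      using nth_c[of m] nth_c[of 0] by (simp_all add: m_def zigzag_support_def)
    moreover have "card {..<n - 1} \<le> hdist (bword n {..<m}) (bword n {})"
      by (rule card_le_hdist_bword) (auto simp: m_def)
    ultimately show ?thesis
      using assms by (auto intro!: hadjI bword_in_hvert)
  qed
  ultimately show ?thesis
    using len by (auto simp: is_cycle_def intro!: exI[of _ c])
qed

theorem proposition2p3: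
  fixes q n d :: nat
  assumes "q \<ge> 2" and "n \<ge> 2" and "0 < d" and "d \<le> n" and "(q, d) \<noteq> (2, n)"
  shows "(q \<ge> 3 \<longrightarrow>
            (\<forall>u\<in>hvert q n. \<forall>v\<in>hvert q n. gdist (hvert q n) (hadj q n d) u v \<le> 2)
            \<and> girth (hvert q n) (hadj q n d) = 3)
       \<and> (q = 2 \<and> 3 * d \<le> 2 * n \<longrightarrow> girth (hvert q n) (hadj q n d) = 3)
       \<and> (q = 2 \<and> 2 * n < 3 * d \<and> d < n \<longrightarrow>
            girth (hvert q n) (hadj q n d) = 4
            \<and> (\<exists>c. is_cycle (hvert q n) (hadj q n d) c \<and> odd (length c)))"
  using hamming_gdist_le_2[OF _ assms(3,4)] hamming_girth_eq_3[OF _ assms(3,4)]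
    binary_hamming_girth_eq_3[OF assms(3)] binary_hamming_girth_eq_4
    binary_hamming_odd_cycle[OF assms(3)]
  by auto

end
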